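(* Let $A_1,\dots,A_N$ be symmetric $N\times N$ matrices over $\mathbb{F}_2$ with $(A_i)_{k,k}=\delta_{ik}$ for all $i,k$, let $A(z)=\sum_{i=1}^Nz(i)A_i$ for $z\in\mathbb{F}_2^N$, and let $C$ be any fixed symmetric $N\times N$ matrix over $\mathbb{F}_2$. Then for every integer $1\le k\le N$, with $z$ uniform in $\mathbb{F}_2^N$, $$\Pr_z\big\{\operatorname{rank}(A(z)+C)\le k-1\big\}\le\frac1{2^N}\sum_{i=0}^{k-1}\binom{N}{i}.$$ *)

theory Defs
  imports "Jordan_Normal_Form.DL_Rank" "HOL-Library.Z2"
begin

definition Amat :: "nat \<Rightarrow> (nat \<Rightarrow> bit mat) \<Rightarrow> bit vec \<Rightarrow> bit mat" where
  "Amat N A z = mat N N (\<lambda>(r, c). \<Sum>i<N. z $ i * A i $$ (r, c))"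

end

theory Submission
  imports Defs "Jordan_Normal_Form.DL_Rank_Submatrix" "HOL-Library.FuncSet"
begin

text \<open>Let S be the set of z for which A(z) + C has rank less than k, and say that a function on
  F_2^N has degree at most d on S if it agrees on S with a multilinear polynomial of degree at
  most d. In the Leibniz expansion of the determinant of a symmetric matrix over F_2, the
  permutations p and inv p contribute equal terms, which cancel; an involution other than the
  identity contributes a product of fewer than n distinct entries. Since the diagonal of
  A(z) + C is z + diag C, the principal minor on U is therefore the monomial z^U up to terms of
  degree below |U|. On S all minors of size at least k vanish, so monomials of degree at least
  k can be lowered, and each of the 2^|S| functions S \<rightarrow> F_2 is represented on S by one of the
  2^(sum of (N choose i) over i < k) polynomials of degree at most k - 1.\<close>

(* Keep + and * on bit as field operations instead of rewriting them to xor and conjunction. *)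
declare add_bit_eq_xor [simp del] mult_bit_eq_and [simp del]

lemma bit_add_self [simp]: "(x::bit) + x = 0"
  by (cases x) simp_all

lemma bit_mult_self [simp]: "(x::bit) * x = x"
  by (cases x) simp_all

lemma bit_power_pos: "0 < m \<Longrightarrow> (x::bit) ^ m = x"
  by (cases x) simp_all

lemma signof_bit [simp]: "(of_int (sign p) :: bit) = 1"
  by (simp add: sign_def)

definition bit_monomial :: "nat set \<Rightarrow> bit vec \<Rightarrow> bit" where
  "bit_monomial T z = (\<Prod>i\<in>T. z $ i)"

definition subsets_card_le :: "nat \<Rightarrow> nat \<Rightarrow> nat set set" where
  "subsets_card_le N d = {T. T \<subseteq> {..<N} \<and> card T \<le> d}"

definition degree_le_on :: "nat \<Rightarrow> bit vec set \<Rightarrow> nat \<Rightarrow> (bit vec \<Rightarrow> bit) \<Rightarrow> bool" where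
  "degree_le_on N S d f \<longleftrightarrow>
     (\<exists>c. \<forall>z\<in>S. f z = (\<Sum>T\<in>subsets_card_le N d. c T * bit_monomial T z))"

lemma finite_subsets_card_le [simp]: "finite (subsets_card_le N d)"
  unfolding subsets_card_le_def by (rule finite_subset[of _ "Pow {..<N}"]) auto

lemma card_subsets_card_le: "card (subsets_card_le N d) = (\<Sum>i\<le>d. N choose i)"
proof -
  have "subsets_card_le N d = (\<Union>i\<le>d. {T. T \<subseteq> {..<N} \<and> card T = i})"
    unfolding subsets_card_le_def by auto
  also have "card \<dots> = (\<Sum>i\<le>d. card {T. T \<subseteq> {..<N} \<and> card T = i})"
    by (rule card_UN_disjoint) (auto intro: finite_subset[of _ "Pow {..<N}"])
  also have "\<dots> = (\<Sum>i\<le>d. N choose i)"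
    by (simp add: n_subsets)
  finally show ?thesis .
qed

lemma degree_le_on_cong:
  assumes "degree_le_on N S d f" "\<And>z. z \<in> S \<Longrightarrow> f z = g z"
  shows "degree_le_on N S d g"
proof -
  obtain c where "\<And>z. z \<in> S \<Longrightarrow> f z = (\<Sum>T\<in>subsets_card_le N d. c T * bit_monomial T z)"
    using assms(1) unfolding degree_le_on_def by blast
  then have "\<forall>z\<in>S. g z = (\<Sum>T\<in>subsets_card_le N d. c T * bit_monomial T z)"
    using assms(2) by simp
  then show ?thesis
    unfolding degree_le_on_def by blast
qed

lemma degree_le_on_mono:
  assumes f: "degree_le_on N S d f" and "d \<le> d'"
  shows "degree_le_on N S d' f"
proof -
  obtain c where c: "\<And>z. z \<in> S \<Longrightarrow> f z = (\<Sum>T\<in>subsets_card_le N d. c T * bit_monomial T z)"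
    using f unfolding degree_le_on_def by blast
  have sub: "subsets_card_le N d \<subseteq> subsets_card_le N d'"
    using \<open>d \<le> d'\<close> unfolding subsets_card_le_def by auto
  have eq: "f z = (\<Sum>T\<in>subsets_card_le N d'. (if T \<in> subsets_card_le N d then c T else 0) * bit_monomial T z)"
    if "z \<in> S" for z
    unfolding c[OF that] by (rule sum.mono_neutral_cong_left[OF finite_subsets_card_le sub]) auto
  show ?thesis
    unfolding degree_le_on_def
    by (rule exI[of _ "\<lambda>T. if T \<in> subsets_card_le N d then c T else 0"]) (simp add: eq)
qed

lemma degree_le_on_const: "degree_le_on N S d (\<lambda>z. a)"
proof -
  have eq: "(\<Sum>T\<in>subsets_card_le N d. (if T = {} then a else 0) * bit_monomial T z)
      = (\<Sum>T\<in>{{}}. (if T = {} then a else 0) * bit_monomial T z)" for z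
    by (rule sum.mono_neutral_right) (auto simp: subsets_card_le_def)
  show ?thesis
    unfolding degree_le_on_def
    by (rule exI[of _ "\<lambda>T. if T = {} then a else 0"]) (simp add: eq bit_monomial_def[of "{}"])
qed

lemma degree_le_on_add:
  assumes "degree_le_on N S d f" "degree_le_on N S d g"
  shows "degree_le_on N S d (\<lambda>z. f z + g z)"
proof -
  obtain c c' where
    c: "\<And>z. z \<in> S \<Longrightarrow> f z = (\<Sum>T\<in>subsets_card_le N d. c T * bit_monomial T z)" and
    c': "\<And>z. z \<in> S \<Longrightarrow> g z = (\<Sum>T\<in>subsets_card_le N d. c' T * bit_monomial T z)"
    using assms unfolding degree_le_on_def by blast
  show ?thesis
    unfolding degree_le_on_def
    by (rule exI[of _ "\<lambda>T. c T + c' T"]) (simp add: c c' distrib_right sum.distrib)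
qed

lemma degree_le_on_cmult:
  assumes "degree_le_on N S d f"
  shows "degree_le_on N S d (\<lambda>z. a * f z)"
proof -
  obtain c where c: "\<And>z. z \<in> S \<Longrightarrow> f z = (\<Sum>T\<in>subsets_card_le N d. c T * bit_monomial T z)"
    using assms unfolding degree_le_on_def by blast
  show ?thesis
    unfolding degree_le_on_def
    by (rule exI[of _ "\<lambda>T. a * c T"]) (simp add: c sum_distrib_left mult.assoc)
qed

lemma degree_le_on_sum:
  "finite I \<Longrightarrow> (\<And>i. i \<in> I \<Longrightarrow> degree_le_on N S d (f i))
    \<Longrightarrow> degree_le_on N S d (\<lambda>z. \<Sum>i\<in>I. f i z)"
proof (induction I rule: finite_induct)
  case empty
  then show ?case using degree_le_on_const[of N S d 0] by simp
next
  case (insert x F)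
  then show ?case using degree_le_on_add[of N S d "f x" "\<lambda>z. \<Sum>i\<in>F. f i z"] by simp
qed

lemma bit_monomial_insert:
  assumes "finite T"
  shows "z $ i * bit_monomial T z = bit_monomial (insert i T) z"
proof (cases "i \<in> T")
  case True
  have T: "bit_monomial T z = z $ i * bit_monomial (T - {i}) z"
    unfolding bit_monomial_def by (rule prod.remove[OF assms True])
  have "z $ i * bit_monomial T z = (z $ i * z $ i) * bit_monomial (T - {i}) z"
    unfolding T by (rule mult.assoc[symmetric])
  also have "\<dots> = bit_monomial T z"
    unfolding T bit_mult_self ..
  finally show ?thesis
    using True by (simp add: insert_absorb)
next
  case False
  then show ?thesis
    unfolding bit_monomial_def using assms by simp
qed

lemma degree_le_on_mult_var:
  assumes f: "degree_le_on N S d f" and i: "i < N"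
  shows "degree_le_on N S (Suc d) (\<lambda>z. z $ i * f z)"
proof -
  obtain c where c: "\<And>z. z \<in> S \<Longrightarrow> f z = (\<Sum>T\<in>subsets_card_le N d. c T * bit_monomial T z)"
    using f unfolding degree_le_on_def by blast
  have T_fin: "finite T" if "T \<in> subsets_card_le N d" for T
    using that finite_subset unfolding subsets_card_le_def by blast
  have img: "insert i ` subsets_card_le N d \<subseteq> subsets_card_le N (Suc d)"
  proof (rule image_subsetI)
    fix T assume T: "T \<in> subsets_card_le N d"
    then show "insert i T \<in> subsets_card_le N (Suc d)"
      using T_fin[OF T] i unfolding subsets_card_le_def by (simp add: card_insert_if)
  qed
  define c' where "c' W = (\<Sum>T | T \<in> subsets_card_le N d \<and> insert i T = W. c T)" for W
  have "z $ i * f z = (\<Sum>W\<in>subsets_card_le N (Suc d). c' W * bit_monomial W z)" if z: "z \<in> S" for z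
  proof -
    have "z $ i * f z = (\<Sum>T\<in>subsets_card_le N d. z $ i * (c T * bit_monomial T z))"
      using c[OF z] by (simp add: sum_distrib_left)
    also have "\<dots> = (\<Sum>T\<in>subsets_card_le N d. c T * bit_monomial (insert i T) z)"
    proof (rule sum.cong[OF refl])
      fix T assume "T \<in> subsets_card_le N d"
      then show "z $ i * (c T * bit_monomial T z) = c T * bit_monomial (insert i T) z"
        using bit_monomial_insert[OF T_fin, of T z i] by (simp add: mult.left_commute)
    qed
    also have "\<dots> = (\<Sum>W\<in>subsets_card_le N (Suc d).
        \<Sum>T | T \<in> subsets_card_le N d \<and> insert i T = W. c T * bit_monomial (insert i T) z)"
      by (rule sum.group[symmetric, OF finite_subsets_card_le finite_subsets_card_le img])
    also have "\<dots> = (\<Sum>W\<in>subsets_card_le N (Suc d). c' W * bit_monomial W z)"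
      unfolding c'_def sum_distrib_right by (intro sum.cong refl) auto
    finally show ?thesis .
  qed
  then show ?thesis
    unfolding degree_le_on_def by blast
qed

lemma degree_le_on_var: "i < N \<Longrightarrow> degree_le_on N S 1 (\<lambda>z. z $ i)"
  using degree_le_on_mult_var[OF degree_le_on_const[of N S 0 1]] by simp

lemma degree_le_on_monomial_mult:
  assumes T: "T \<subseteq> {..<N}" and g: "degree_le_on N S e g"
  shows "degree_le_on N S (card T + e) (\<lambda>z. bit_monomial T z * g z)"
proof -
  have "finite T"
    using T finite_subset by blast
  then show ?thesis
    using T
  proof (induction T rule: finite_induct)
    case empty
    then show ?case using g by (simp add: bit_monomial_def)
  next
    case (insert x F)
    then have "degree_le_on N S (Suc (card F + e)) (\<lambda>z. z $ x * (bit_monomial F z * g z))"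
      by (intro degree_le_on_mult_var) auto
    then show ?case
      using insert(1,2) by (simp add: bit_monomial_insert mult.assoc[symmetric])
  qed
qed

lemma degree_le_on_mult:
  assumes f: "degree_le_on N S d f" and g: "degree_le_on N S e g"
  shows "degree_le_on N S (d + e) (\<lambda>z. f z * g z)"
proof -
  obtain c where c: "\<And>z. z \<in> S \<Longrightarrow> f z = (\<Sum>T\<in>subsets_card_le N d. c T * bit_monomial T z)"
    using f unfolding degree_le_on_def by blast
  have "degree_le_on N S (d + e) (\<lambda>z. \<Sum>T\<in>subsets_card_le N d. c T * (bit_monomial T z * g z))"
  proof (rule degree_le_on_sum[OF finite_subsets_card_le])
    fix T assume "T \<in> subsets_card_le N d"
    then have "T \<subseteq> {..<N}" "card T + e \<le> d + e"
      unfolding subsets_card_le_def by auto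
    then show "degree_le_on N S (d + e) (\<lambda>z. c T * (bit_monomial T z * g z))"
      by (intro degree_le_on_cmult degree_le_on_mono[OF degree_le_on_monomial_mult[OF _ g]])
  qed
  then show ?thesis
    by (rule degree_le_on_cong) (simp add: c sum_distrib_right mult.assoc)
qed

lemma degree_le_on_prod:
  "finite I \<Longrightarrow> (\<And>i. i \<in> I \<Longrightarrow> degree_le_on N S (d i) (f i))
    \<Longrightarrow> degree_le_on N S (\<Sum>i\<in>I. d i) (\<lambda>z. \<Prod>i\<in>I. f i z)"
proof (induction I rule: finite_induct)
  case empty
  then show ?case using degree_le_on_const[of N S 0 1] by simp
next
  case (insert x F)
  then show ?case
    using degree_le_on_mult[of N S "d x" "f x" "\<Sum>i\<in>F. d i" "\<lambda>z. \<Prod>i\<in>F. f i z"] by simp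
qed

lemma prod_bit_image:
  fixes h :: "'b \<Rightarrow> bit"
  assumes "finite I"
  shows "(\<Prod>i\<in>I. h (f i)) = (\<Prod>y\<in>f ` I. h y)"
proof -
  have "(\<Prod>i\<in>I. h (f i)) = (\<Prod>y\<in>f ` I. \<Prod>i | i \<in> I \<and> f i = y. h (f i))"
    by (rule prod.group[symmetric]) (use assms in auto)
  also have "\<dots> = (\<Prod>y\<in>f ` I. h y ^ card {i \<in> I. f i = y})"
  proof (rule prod.cong[OF refl])
    fix y
    have "(\<Prod>i | i \<in> I \<and> f i = y. h (f i)) = (\<Prod>i | i \<in> I \<and> f i = y. h y)"
      by (rule prod.cong) auto
    then show "(\<Prod>i | i \<in> I \<and> f i = y. h (f i)) = h y ^ card {i \<in> I. f i = y}"
      by simp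
  qed
  also have "\<dots> = (\<Prod>y\<in>f ` I. h y)"
    by (rule prod.cong[OF refl], rule bit_power_pos) (use assms in \<open>auto simp: card_gt_0_iff\<close>)
  finally show ?thesis .
qed

lemma degree_le_on_prod_distinct:
  assumes "finite I" "\<And>i. i \<in> I \<Longrightarrow> degree_le_on N S 1 (f i)"
  shows "degree_le_on N S (card (f ` I)) (\<lambda>z. \<Prod>i\<in>I. f i z)"
proof -
  have "degree_le_on N S (\<Sum>g\<in>f ` I. 1) (\<lambda>z. \<Prod>g\<in>f ` I. g z)"
    by (rule degree_le_on_prod) (use assms in auto)
  moreover have "(\<Prod>g\<in>f ` I. g z) = (\<Prod>i\<in>I. f i z)" for z
    by (rule prod_bit_image[symmetric]) (rule assms(1))
  ultimately show ?thesis
    by simp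
qed

lemma degree_le_on_prod_shift:
  assumes "finite I" "I \<noteq> {}" "\<And>i. i \<in> I \<Longrightarrow> degree_le_on N S 1 (x i)"
  shows "degree_le_on N S (card I - 1) (\<lambda>z. (\<Prod>i\<in>I. x i z + e i) + (\<Prod>i\<in>I. x i z))"
  using assms
proof (induction I rule: finite_ne_induct)
  case (singleton a)
  have "x a z + e a + x a z = e a" for z
    by (simp add: add.commute add.left_commute)
  then show ?case
    using degree_le_on_const[of N S 0 "e a"] by simp
next
  case (insert a I)
  let ?P = "\<lambda>z. \<Prod>i\<in>I. x i z + e i" and ?Q = "\<lambda>z. \<Prod>i\<in>I. x i z"
  have IH: "degree_le_on N S (card I - 1) (\<lambda>z. ?P z + ?Q z)"
    using insert by simp
  have card_I: "card I - 1 + 1 = card I"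
    using insert(1,2) by (simp add: Suc_leI card_gt_0_iff)
  have Q: "degree_le_on N S (card I) ?Q"
    using degree_le_on_prod[OF insert(1), of N S "\<lambda>_. 1" x] insert.prems by simp
  have split: "(u + v) * P + u * Q = u * (P + Q) + v * (P + Q) + v * Q" for u v P Q :: bit
    by (cases u; cases v; cases P; cases Q) simp_all
  have "degree_le_on N S (card I)
      (\<lambda>z. x a z * (?P z + ?Q z) + e a * (?P z + ?Q z) + e a * ?Q z)"
  proof (intro degree_le_on_add)
    show "degree_le_on N S (card I) (\<lambda>z. x a z * (?P z + ?Q z))"
      using degree_le_on_mult[OF insert.prems[of a] IH] card_I by (simp add: add.commute)
    show "degree_le_on N S (card I) (\<lambda>z. e a * (?P z + ?Q z))"
      by (rule degree_le_on_mono[OF degree_le_on_cmult[OF IH]]) simp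
    show "degree_le_on N S (card I) (\<lambda>z. e a * ?Q z)"
      by (rule degree_le_on_cmult[OF Q])
  qed
  then have "degree_le_on N S (card I) (\<lambda>z. (\<Prod>i\<in>insert a I. x i z + e i) + (\<Prod>i\<in>insert a I. x i z))"
    by (rule degree_le_on_cong) (simp add: insert(1,3) split)
  then show ?case
    using insert(1,3) by simp
qed

lemma degree_le_on_involution_term:
  assumes p: "p permutes {0..<n}" "p \<circ> p = id" "p \<noteq> id"
    and sym: "\<And>z i j. i < n \<Longrightarrow> j < n \<Longrightarrow> b z i j = b z j i"
    and lin: "\<And>i j. i < n \<Longrightarrow> j < n \<Longrightarrow> degree_le_on N S 1 (\<lambda>z. b z i j)"
  shows "degree_le_on N S (n - 1) (\<lambda>z. \<Prod>i=0..<n. b z i (p i))"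
proof -
  define f where "f i = (\<lambda>z. b z i (p i))" for i
  have pp: "p (p i) = i" for i
    using p(2) by (metis comp_apply id_apply)
  have p_less: "i < n \<Longrightarrow> p i < n" for i
    using permutes_in_image[OF p(1)] by simp
  obtain j where j: "p j \<noteq> j"
    using p(3) by (metis eq_id_iff)
  then have "j < n"
    using permutes_not_in[OF p(1)] by fastforce
  have "f (p j) = f j"
    unfolding f_def using sym \<open>j < n\<close> p_less pp by auto
  have "\<not> inj_on f {0..<n}"
  proof
    assume "inj_on f {0..<n}"
    then have "p j = j"
      using \<open>f (p j) = f j\<close> \<open>j < n\<close> p_less by (auto dest: inj_onD)
    with j show False ..
  qed
  then have "card (f ` {0..<n}) < n"
    using card_image_le[of "{0..<n}" f] inj_on_iff_eq_card[of "{0..<n}" f] by fastforce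
  moreover have "degree_le_on N S (card (f ` {0..<n})) (\<lambda>z. \<Prod>i=0..<n. f i z)"
  proof (rule degree_le_on_prod_distinct)
    fix i assume "i \<in> {0..<n}"
    then show "degree_le_on N S 1 (f i)"
      unfolding f_def using p_less by (intro lin) auto
  qed simp
  ultimately show ?thesis
    unfolding f_def by (auto elim: degree_le_on_mono)
qed

lemma sum_bit_fixpoint_free_involution:
  fixes f :: "'a \<Rightarrow> bit"
  assumes "finite X" "\<And>x. x \<in> X \<Longrightarrow> g x \<in> X" "\<And>x. x \<in> X \<Longrightarrow> g (g x) = x"
    "\<And>x. x \<in> X \<Longrightarrow> g x \<noteq> x" "\<And>x. x \<in> X \<Longrightarrow> f (g x) = f x"
  shows "(\<Sum>x\<in>X. f x) = 0"
  using assms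
proof (induction "card X" arbitrary: X rule: less_induct)
  case less
  show ?case
  proof (cases "X = {}")
    case False
    then obtain x where x: "x \<in> X"
      by blast
    define Y where "Y = X - {x, g x}"
    have "(\<Sum>x\<in>X. f x) = (\<Sum>x\<in>Y. f x) + (\<Sum>x\<in>{x, g x}. f x)"
      unfolding Y_def by (rule sum.subset_diff) (use x less.prems in auto)
    also have "(\<Sum>x\<in>{x, g x}. f x) = 0"
      using less.prems(4,5)[OF x] by simp
    also have "(\<Sum>x\<in>Y. f x) = 0"
    proof (rule less.hyps)
      show "card Y < card X"
        unfolding Y_def by (rule psubset_card_mono) (use x less.prems(1) in auto)
      show "finite Y"
        unfolding Y_def using less.prems(1) by simp
      fix y assume "y \<in> Y"
      then have y: "y \<in> X" "y \<noteq> x" "y \<noteq> g x"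
        unfolding Y_def by auto
      show "g y \<in> Y"
        unfolding Y_def using y less.prems(2,3)[OF y(1)] less.prems(3)[OF x] by auto
      show "g (g y) = y" "g y \<noteq> y" "f (g y) = f y"
        using less.prems(3-5) y(1) by auto
    qed
    finally show ?thesis
      by simp
  qed simp
qed

lemma det_symmetric_bit:
  fixes B :: "bit mat"
  assumes B: "B \<in> carrier_mat n n" and symmetric: "\<And>i j. i < n \<Longrightarrow> j < n \<Longrightarrow> B $$ (i, j) = B $$ (j, i)"
  shows "det B = (\<Sum>p | p permutes {0..<n} \<and> p \<circ> p = id. \<Prod>i=0..<n. B $$ (i, p i))"
proof -
  let ?t = "\<lambda>p. \<Prod>i=0..<n. B $$ (i, p i)"
  define P where "P = {p. p permutes {0..<n}}"
  have finP: "finite P"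
    unfolding P_def by (simp add: finite_permutations)
  have "(\<Sum>p\<in>P - {p. p \<circ> p = id}. ?t p) = 0"
  \<comment> \<open>inv_into UNIV rather than inv: the latter is group syntax once HOL-Algebra is loaded\<close>
  proof (rule sum_bit_fixpoint_free_involution[where g = "inv_into UNIV"])
    fix p assume "p \<in> P - {p. p \<circ> p = id}"
    then have p: "p permutes {0..<n}" and pp: "p \<circ> p \<noteq> id"
      unfolding P_def by auto
    have "inv_into UNIV p \<circ> inv_into UNIV p \<noteq> id"
    proof
      assume "inv_into UNIV p \<circ> inv_into UNIV p = id"
      then have "p \<circ> p = p \<circ> (p \<circ> inv_into UNIV p) \<circ> inv_into UNIV p"
        by (simp add: comp_assoc)
      also have "\<dots> = id"
        using permutes_inv_o(1)[OF p] by simp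
      finally show False
        using pp by simp
    qed
    then show "inv_into UNIV p \<in> P - {p. p \<circ> p = id}"
      unfolding P_def using permutes_inv[OF p] by simp
    show "inv_into UNIV (inv_into UNIV p) = p"
      by (rule permutes_inv_inv[OF p])
    show "inv_into UNIV p \<noteq> p"
      using pp permutes_inv_o(1)[OF p] by auto
    have "?t (inv_into UNIV p) = (\<Prod>i=0..<n. B $$ (p i, inv_into UNIV p (p i)))"
      by (subst prod.permute[OF p]) (simp add: comp_def)
    also have "\<dots> = ?t p"
    proof (rule prod.cong[OF refl])
      fix i assume "i \<in> {0..<n}"
      then have "i < n" "p i < n"
        using permutes_in_image[OF p] by auto
      then show "B $$ (p i, inv_into UNIV p (p i)) = B $$ (i, p i)"
        using symmetric[of "p i" i] permutes_inverses(2)[OF p] by simp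
    qed
    finally show "?t (inv_into UNIV p) = ?t p" .
  qed (simp add: finP)
  then show ?thesis
    unfolding det_def'[OF B] using sum.Int_Diff[OF finP, of ?t "{p. p \<circ> p = id}"]
    by (simp add: P_def Collect_conj_eq)
qed

lemma degree_le_on_det_add_diagonal_monomial:
  fixes M :: "bit vec \<Rightarrow> bit mat"
  assumes n: "1 \<le> n" and M: "\<And>z. M z \<in> carrier_mat n n"
    and symmetric: "\<And>z i j. i < n \<Longrightarrow> j < n \<Longrightarrow> M z $$ (i, j) = M z $$ (j, i)"
    and lin: "\<And>i j. i < n \<Longrightarrow> j < n \<Longrightarrow> degree_le_on N S 1 (\<lambda>z. M z $$ (i, j))"
    and diag: "\<And>z i. z \<in> S \<Longrightarrow> i < n \<Longrightarrow> M z $$ (i, i) = z $ \<sigma> i + e i"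
    and \<sigma>: "\<And>i. i < n \<Longrightarrow> \<sigma> i < N"
  shows "degree_le_on N S (n - 1) (\<lambda>z. det (M z) + (\<Prod>i=0..<n. z $ \<sigma> i))"
proof -
  let ?t = "\<lambda>p z. \<Prod>i=0..<n. M z $$ (i, p i)"
  define Inv where "Inv = {p. p permutes {0..<n} \<and> p \<circ> p = id}"
  have fin: "finite Inv"
    unfolding Inv_def by (rule finite_subset[OF _ finite_permutations[of "{0..<n}"]]) auto
  have id_in: "id \<in> Inv"
    unfolding Inv_def by (simp add: permutes_id)
  have det: "det (M z) = ?t id z + (\<Sum>p\<in>Inv - {id}. ?t p z)" for z
  proof -
    have "det (M z) = (\<Sum>p\<in>Inv. ?t p z)"
      unfolding Inv_def by (rule det_symmetric_bit[OF M symmetric])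
    also have "\<dots> = ?t id z + (\<Sum>p\<in>Inv - {id}. ?t p z)"
      by (rule sum.remove[OF fin id_in, where g = "\<lambda>p. ?t p z"])
    finally show ?thesis .
  qed
  have diag_prod: "(\<Prod>i=0..<n. M z $$ (i, i)) = (\<Prod>i=0..<n. z $ \<sigma> i + e i)" if "z \<in> S" for z
    by (rule prod.cong) (simp_all add: diag[OF that])
  have "degree_le_on N S (card {0..<n} - 1)
      (\<lambda>z. (\<Prod>i=0..<n. z $ \<sigma> i + e i) + (\<Prod>i=0..<n. z $ \<sigma> i))"
    by (rule degree_le_on_prod_shift) (use n \<sigma> degree_le_on_var in auto)
  then have "degree_le_on N S (n - 1)
      (\<lambda>z. (\<Prod>i=0..<n. z $ \<sigma> i + e i) + (\<Prod>i=0..<n. z $ \<sigma> i))"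
    by simp
  then have "degree_le_on N S (n - 1) (\<lambda>z. ?t id z + (\<Prod>i=0..<n. z $ \<sigma> i))"
    by (elim degree_le_on_cong) (simp add: diag_prod)
  moreover have "degree_le_on N S (n - 1) (\<lambda>z. \<Sum>p\<in>Inv - {id}. ?t p z)"
  proof (rule degree_le_on_sum)
    fix p assume "p \<in> Inv - {id}"
    then have "p permutes {0..<n}" "p \<circ> p = id" "p \<noteq> id"
      unfolding Inv_def by auto
    then show "degree_le_on N S (n - 1) (?t p)"
      by (rule degree_le_on_involution_term[where b = "\<lambda>z i j. M z $$ (i, j)", OF _ _ _ symmetric lin])
  qed (simp add: fin)
  ultimately have "degree_le_on N S (n - 1)
      (\<lambda>z. (?t id z + (\<Prod>i=0..<n. z $ \<sigma> i)) + (\<Sum>p\<in>Inv - {id}. ?t p z))"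
    by (rule degree_le_on_add)
  then show ?thesis
    by (rule degree_le_on_cong) (simp add: det add_ac)
qed

lemma degree_le_on_reduce:
  assumes high: "\<And>U. U \<subseteq> {..<N} \<Longrightarrow> d < card U \<Longrightarrow> degree_le_on N S (card U - 1) (bit_monomial U)"
  shows "degree_le_on N S e f \<Longrightarrow> degree_le_on N S d f"
proof (induction e arbitrary: f)
  case 0
  then show ?case
    by (rule degree_le_on_mono) simp
next
  case (Suc e)
  show ?case
  proof (cases "Suc e \<le> d")
    case True
    then show ?thesis
      using Suc.prems degree_le_on_mono by blast
  next
    case False
    obtain c where c: "\<And>z. z \<in> S \<Longrightarrow> f z = (\<Sum>T\<in>subsets_card_le N (Suc e). c T * bit_monomial T z)"
      using Suc.prems unfolding degree_le_on_def by blast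
    define E where "E = {T \<in> subsets_card_le N (Suc e). card T = Suc e}"
    have fin_E: "finite E"
      unfolding E_def by simp
    have split: "subsets_card_le N (Suc e) = subsets_card_le N e \<union> E" "subsets_card_le N e \<inter> E = {}"
      unfolding E_def subsets_card_le_def by auto
    have "degree_le_on N S e (\<lambda>z. \<Sum>T\<in>subsets_card_le N e. c T * bit_monomial T z)"
      unfolding degree_le_on_def by blast
    moreover have "degree_le_on N S e (\<lambda>z. \<Sum>T\<in>E. c T * bit_monomial T z)"
    proof (intro degree_le_on_sum degree_le_on_cmult)
      fix T assume "T \<in> E"
      then have "T \<subseteq> {..<N}" "card T = Suc e"
        unfolding E_def subsets_card_le_def by auto
      then show "degree_le_on N S e (bit_monomial T)"
        using high[of T] False by simp
    qed (rule fin_E)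
    ultimately have "degree_le_on N S e
        (\<lambda>z. (\<Sum>T\<in>subsets_card_le N e. c T * bit_monomial T z) + (\<Sum>T\<in>E. c T * bit_monomial T z))"
      by (rule degree_le_on_add)
    then have "degree_le_on N S e f"
      by (rule degree_le_on_cong) (simp add: c split(1) sum.union_disjoint[OF _ fin_E split(2)])
    then show ?thesis
      by (rule Suc.IH)
  qed
qed

lemma bit_delta_prod:
  assumes "z \<in> carrier_vec N" "w \<in> carrier_vec N"
  shows "(\<Prod>i<N. z $ i + w $ i + 1) = (if z = w then 1 else (0::bit))"
proof (cases "z = w")
  case False
  then obtain i where i: "i < N" "z $ i \<noteq> w $ i"
    using assms by (metis carrier_vecD eq_vecI)
  then have "z $ i + w $ i + 1 = 0"
    by (cases "z $ i"; cases "w $ i") simp_all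
  then show ?thesis
    using False i(1) by (metis finite_lessThan lessThan_iff prod_zero)
qed simp

lemma degree_le_on_interpolation:
  assumes S: "finite S" "S \<subseteq> carrier_vec N"
  shows "degree_le_on N S N g"
proof -
  have "degree_le_on N S N (\<lambda>z. \<Sum>w\<in>S. g w * (\<Prod>i<N. z $ i + w $ i + 1))"
  proof (intro degree_le_on_sum[OF S(1)] degree_le_on_cmult)
    fix w
    have "degree_le_on N S (\<Sum>i<N. 1) (\<lambda>z. \<Prod>i<N. z $ i + (w $ i + 1))"
      by (intro degree_le_on_prod degree_le_on_add degree_le_on_var degree_le_on_const) auto
    then show "degree_le_on N S N (\<lambda>z. \<Prod>i<N. z $ i + w $ i + 1)"
      by (simp add: add.assoc)
  qed
  then show ?thesis
  proof (rule degree_le_on_cong)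
    fix z assume "z \<in> S"
    then have "(\<Sum>w\<in>S. g w * (\<Prod>i<N. z $ i + w $ i + 1)) = (\<Sum>w\<in>S. if z = w then g w else 0)"
      using S by (intro sum.cong) (auto simp: bit_delta_prod subsetD)
    also have "\<dots> = g z"
      using \<open>z \<in> S\<close> S(1) by simp
    finally show "(\<Sum>w\<in>S. g w * (\<Prod>i<N. z $ i + w $ i + 1)) = g z" .
  qed
qed

lemma card_bit_UNIV: "card (UNIV :: bit set) = 2"
proof -
  have "(UNIV :: bit set) = {0, 1}"
    by (auto intro: bit.exhaust)
  moreover have "card {0::bit, 1} = 2"
    by simp
  ultimately show ?thesis
    by simp
qed

lemma card_le_if_all_degree_le_on:
  assumes S: "finite S" and all: "\<And>g. degree_le_on N S d g"
  shows "card S \<le> card (subsets_card_le N d)"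
proof -
  have "\<forall>g. \<exists>c. \<forall>z\<in>S. g z = (\<Sum>T\<in>subsets_card_le N d. c T * bit_monomial T z)"
    using all unfolding degree_le_on_def by blast
  then obtain c where c: "\<And>g z. z \<in> S \<Longrightarrow> g z = (\<Sum>T\<in>subsets_card_le N d. c g T * bit_monomial T z)"
    by (auto dest!: choice)
  define \<Phi> where "\<Phi> g = {T \<in> subsets_card_le N d. c g T = 1}" for g
  have \<Phi>: "g z = (\<Sum>T\<in>\<Phi> g. bit_monomial T z)" if "z \<in> S" for g z
  proof -
    have "g z = (\<Sum>T\<in>subsets_card_le N d. if c g T = 1 then bit_monomial T z else 0)"
      unfolding c[OF that, of g] by (intro sum.cong) (auto elim: bit.exhaust)
    then show ?thesis
      unfolding \<Phi>_def by (simp add: sum.inter_filter)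
  qed
  have "inj_on \<Phi> (S \<rightarrow>\<^sub>E UNIV)"
  proof (rule inj_onI, rule ext)
    fix g h z assume "g \<in> S \<rightarrow>\<^sub>E UNIV" "h \<in> S \<rightarrow>\<^sub>E UNIV" "\<Phi> g = \<Phi> h"
    then show "g z = h z"
      using \<Phi>[of z g] \<Phi>[of z h] PiE_arb[of g S _ z] PiE_arb[of h S _ z] by (cases "z \<in> S") simp_all
  qed
  then have "card (S \<rightarrow>\<^sub>E (UNIV :: bit set)) \<le> card (Pow (subsets_card_le N d))"
    by (rule card_inj_on_le) (auto simp: \<Phi>_def)
  then have "(2::nat) ^ card S \<le> 2 ^ card (subsets_card_le N d)"
    using S by (simp add: card_PiE card_bit_UNIV card_Pow)
  then show ?thesis
    by simp
qed

lemma bij_betw_pick: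
  assumes "finite U"
  shows "bij_betw (pick U) {0..<card U} U"
proof -
  have inj: "inj_on (pick U) {0..<card U}"
    by (rule inj_onI) (metis atLeastLessThan_iff linorder_neqE_nat order_less_irrefl pick_mono_le)
  moreover have "pick U ` {0..<card U} \<subseteq> U"
    using pick_in_set_le by auto
  ultimately have "pick U ` {0..<card U} = U"
    using card_image[OF inj] card_subset_eq[OF assms] by simp
  with inj show ?thesis
    unfolding bij_betw_def by simp
qed

lemma det_submatrix_eq_0_if_rank_less:
  assumes B: "B \<in> carrier_mat n nc" and J: "J \<subseteq> {..<nc}" and rank: "vec_space.rank n B < card J"
  shows "det (submatrix B I J) = 0"
proof (rule ccontr)
  assume "det (submatrix B I J) \<noteq> 0"
  then have "card {j. j < nc \<and> j \<in> J} \<le> vec_space.rank n B"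
    by (rule vec_space.rank_gt_minor[OF B])
  moreover have "{j. j < nc \<and> j \<in> J} = J"
    using J by auto
  ultimately show False
    using rank by simp
qed

lemma Amat_index: "r < N \<Longrightarrow> c < N \<Longrightarrow> Amat N A z $$ (r, c) = (\<Sum>i<N. z $ i * A i $$ (r, c))"
  unfolding Amat_def by simp

lemma Amat_symmetric:
  assumes "\<And>i. i < N \<Longrightarrow> A i \<in> carrier_mat N N" "\<And>i. i < N \<Longrightarrow> transpose_mat (A i) = A i"
    and "r < N" "c < N"
  shows "Amat N A z $$ (r, c) = Amat N A z $$ (c, r)"
proof -
  have "A i $$ (r, c) = A i $$ (c, r)" if "i < N" for i
    using assms(1,2)[OF that] assms(3,4) by (metis carrier_matD(1,2) index_transpose_mat(1))
  then show ?thesis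
    using assms(3,4) by (auto simp: Amat_index intro: sum.cong)
qed

lemma Amat_diag:
  assumes "\<And>i j. i < N \<Longrightarrow> j < N \<Longrightarrow> A i $$ (j, j) = (if i = j then 1 else 0)" and "r < N"
  shows "Amat N A z $$ (r, r) = z $ r"
proof -
  have "(\<Sum>i<N. z $ i * A i $$ (r, r)) = (\<Sum>i<N. if i = r then z $ i else 0)"
    by (rule sum.cong) (simp_all add: assms)
  then show ?thesis
    using assms(2) by (simp add: Amat_index)
qed

lemma degree_le_on_Amat_index:
  assumes "r < N" "c < N"
  shows "degree_le_on N S 1 (\<lambda>z. Amat N A z $$ (r, c))"
proof -
  have "degree_le_on N S 1 (\<lambda>z. \<Sum>i<N. z $ i * A i $$ (r, c))"
    by (intro degree_le_on_sum) (auto intro: degree_le_on_mult[OF degree_le_on_var degree_le_on_const, simplified])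
  then show ?thesis
    by (elim degree_le_on_cong) (simp add: Amat_index assms)
qed

lemma degree_le_on_principal_minor:
  assumes A_dim: "\<And>i. i < N \<Longrightarrow> A i \<in> carrier_mat N N"
    and A_sym: "\<And>i. i < N \<Longrightarrow> transpose_mat (A i) = A i"
    and A_diag: "\<And>i j. i < N \<Longrightarrow> j < N \<Longrightarrow> A i $$ (j, j) = (if i = j then 1 else 0)"
    and C_dim: "C \<in> carrier_mat N N" and C_sym: "transpose_mat C = C"
    and U: "U \<subseteq> {..<N}" "U \<noteq> {}"
  shows "degree_le_on N S (card U - 1)
           (\<lambda>z. det (submatrix (Amat N A z + C) U U) + bit_monomial U z)"
proof -
  let ?M = "\<lambda>z. submatrix (Amat N A z + C) U U"
  have U_fin: "finite U"
    by (rule finite_subset[OF U(1)]) simp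
  have U_eq: "{i. i < N \<and> i \<in> U} = U"
    using U(1) by auto
  have pick: "pick U i < N" if "i < card U" for i
    using pick_in_set_le[OF that] U(1) by auto
  have C_dims: "dim_row C = N" "dim_col C = N"
    using C_dim by auto
  have M_index: "?M z $$ (i, j) = Amat N A z $$ (pick U i, pick U j) + C $$ (pick U i, pick U j)"
    if "i < card U" "j < card U" for z i j
  proof -
    have "?M z $$ (i, j) = (Amat N A z + C) $$ (pick U i, pick U j)"
      by (rule submatrix_index) (use that in \<open>simp_all add: C_dims U_eq\<close>)
    then show ?thesis
      using that pick C_dim by simp
  qed
  have C_symmetric: "C $$ (r, c) = C $$ (c, r)" if "r < N" "c < N" for r c
    using C_sym C_dim that by (metis carrier_matD(1,2) index_transpose_mat(1))
  have "degree_le_on N S (card U - 1) (\<lambda>z. det (?M z) + (\<Prod>i=0..<card U. z $ pick U i))"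
  proof (rule degree_le_on_det_add_diagonal_monomial[where e = "\<lambda>i. C $$ (pick U i, pick U i)"])
    show "1 \<le> card U"
      using U U_fin by (simp add: Suc_leI card_gt_0_iff)
    show "?M z \<in> carrier_mat (card U) (card U)" for z
      unfolding carrier_mat_def by (simp add: dim_submatrix C_dims U_eq)
    show "?M z $$ (i, j) = ?M z $$ (j, i)" if "i < card U" "j < card U" for z i j
      unfolding M_index[OF that] M_index[OF that(2,1)]
      using Amat_symmetric[OF A_dim A_sym pick[OF that(1)] pick[OF that(2)]]
        C_symmetric[OF pick[OF that(1)] pick[OF that(2)]] by (simp only:)
    show "degree_le_on N S 1 (\<lambda>z. ?M z $$ (i, j))" if "i < card U" "j < card U" for i j
    proof -
      have "degree_le_on N S 1 (\<lambda>z. Amat N A z $$ (pick U i, pick U j) + C $$ (pick U i, pick U j))"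
        using that pick by (intro degree_le_on_add degree_le_on_Amat_index degree_le_on_const)
      then show ?thesis
        by (rule degree_le_on_cong) (simp add: M_index that)
    qed
    show "?M z $$ (i, i) = z $ pick U i + C $$ (pick U i, pick U i)" if "i < card U" for z i
      unfolding M_index[OF that that] using Amat_diag[OF A_diag pick[OF that], of z] by (simp only:)
  qed (rule pick)
  moreover have "bit_monomial U z = (\<Prod>i=0..<card U. z $ pick U i)" for z
    unfolding bit_monomial_def by (rule prod.reindex_bij_betw[OF bij_betw_pick[OF U_fin], symmetric])
  ultimately show ?thesis
    by simp
qed

lemma degree_le_on_monomial_low_rank:
  assumes A_dim: "\<And>i. i < N \<Longrightarrow> A i \<in> carrier_mat N N"
    and A_sym: "\<And>i. i < N \<Longrightarrow> transpose_mat (A i) = A i"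
    and A_diag: "\<And>i j. i < N \<Longrightarrow> j < N \<Longrightarrow> A i $$ (j, j) = (if i = j then 1 else 0)"
    and C_dim: "C \<in> carrier_mat N N" and C_sym: "transpose_mat C = C"
    and rank: "\<And>z. z \<in> S \<Longrightarrow> vec_space.rank N (Amat N A z + C) \<le> r"
    and U: "U \<subseteq> {..<N}" "r < card U"
  shows "degree_le_on N S (card U - 1) (bit_monomial U)"
proof -
  have "det (submatrix (Amat N A z + C) U U) = 0" if "z \<in> S" for z
  proof (rule det_submatrix_eq_0_if_rank_less)
    show "Amat N A z + C \<in> carrier_mat N N"
      using C_dim by simp
    show "vec_space.rank N (Amat N A z + C) < card U"
      using rank[OF that] U(2) by simp
  qed (rule U(1))
  moreover have "degree_le_on N S (card U - 1)
      (\<lambda>z. det (submatrix (Amat N A z + C) U U) + bit_monomial U z)"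
    using U by (intro degree_le_on_principal_minor[OF A_dim A_sym A_diag C_dim C_sym]) auto
  ultimately show ?thesis
    by (elim degree_le_on_cong) simp
qed

theorem lemma4p6:
  fixes N k :: nat and A :: "nat \<Rightarrow> bit mat" and C :: "bit mat"
  assumes A_dim: "\<And>i. i < N \<Longrightarrow> A i \<in> carrier_mat N N"
    and A_sym: "\<And>i. i < N \<Longrightarrow> transpose_mat (A i) = A i"
    and A_diag: "\<And>i j. i < N \<Longrightarrow> j < N \<Longrightarrow> A i $$ (j, j) = (if i = j then 1 else 0)"
    and C_dim: "C \<in> carrier_mat N N"
    and C_sym: "transpose_mat C = C"
    and k: "1 \<le> k" "k \<le> N"
  shows "real (card {z \<in> carrier_vec N. vec_space.rank N (Amat N A z + C) \<le> k - 1}) / 2 ^ N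
           \<le> (1 / 2 ^ N) * (\<Sum>i<k. real (N choose i))"
proof -
  define S where "S = {z \<in> carrier_vec N. vec_space.rank N (Amat N A z + C) \<le> k - 1}"
  have "card S \<le> (\<Sum>i<k. N choose i)"
  proof (cases "finite S")
    case True
    have "degree_le_on N S (k - 1) g" for g
    proof (rule degree_le_on_reduce)
      show "degree_le_on N S (card U - 1) (bit_monomial U)" if "U \<subseteq> {..<N}" "k - 1 < card U" for U
        by (rule degree_le_on_monomial_low_rank[OF A_dim A_sym A_diag C_dim C_sym _ that])
          (auto simp: S_def)
      show "degree_le_on N S N g"
        using True by (rule degree_le_on_interpolation) (auto simp: S_def)
    qed
    then have "card S \<le> card (subsets_card_le N (k - 1))"
      by (intro card_le_if_all_degree_le_on True)
    also have "\<dots> = (\<Sum>i<k. N choose i)"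
      using k(1) by (simp add: card_subsets_card_le lessThan_Suc_atMost[symmetric])
    finally show ?thesis .
  qed simp
  then have "real (card S) \<le> (\<Sum>i<k. real (N choose i))"
    unfolding of_nat_sum[symmetric] of_nat_le_iff .
  then show ?thesis
    unfolding S_def by (simp add: divide_right_mono)
qed

end
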